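(* Let $k$ be an algebraically closed field of characteristic zero, $n\ge1$, $q\in k$ a primitive $2n$-th root of unity, $a\in k\setminus\{0\}$, and let $\mathfrak wH_{4n}$ be the algebra generated by $Z,X$ with $Z^{2n+1}=Z$, $ZX=qXZ$, $X^2=0$. For $i\in\mathbb Z_{2n}$ let $S_i$ be the $1$-dimensional module with $X$ acting by $0$ and $Z$ by $q^i$; let $M_i$ be the $2$-dimensional module with basis $v_1^i,v_2^i$, $Xv_1^i=v_2^i$, $Xv_2^i=0$, $Zv_1^i=q^iv_1^i$, $Zv_2^i=q^{i+1}v_2^i$. Let $N_0$ be the $1$-dimensional module on which $Z$ and $X$ act by $0$, and $N_1$ the $2$-dimensional module with basis $w_1,w_2$, $Xw_1=w_2$, $Xw_2=0$, $Zw_1=Zw_2=0$. Then $\{S_i,M_i\mid i\in\mathbb Z_{2n}\}\cup\{N_0,N_1\}$ is a complete list of pairwise non-isomorphic finite-dimensional indecomposable $\mathfrak wH_{4n}$-modules. *)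

theory Defs
  imports "Jordan_Normal_Form.Matrix" "HOL-Computational_Algebra.Polynomial"
begin

definition alg_closed :: "'k::field itself \<Rightarrow> bool" where
  "alg_closed _ \<longleftrightarrow> (\<forall>p :: 'k poly. degree p \<ge> 1 \<longrightarrow> (\<exists>x. poly p x = 0))"

definition primitive_root :: "nat \<Rightarrow> 'k::field \<Rightarrow> bool" where
  "primitive_root m q \<longleftrightarrow> q ^ m = 1 \<and> (\<forall>j. 0 < j \<and> j < m \<longrightarrow> q ^ j \<noteq> 1)"

text \<open>A d-dimensional wH_{4n}-module, given in a basis: the matrices of Z and X
  acting on column vectors in k^d, satisfying Z^(2n+1) = Z, ZX = qXZ, X^2 = 0.\<close>
type_synonym 'k rep = "nat \<times> 'k mat \<times> 'k mat"

definition is_wH_mod :: "nat \<Rightarrow> 'k::field \<Rightarrow> 'k rep \<Rightarrow> bool" where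
  "is_wH_mod n q M \<longleftrightarrow> (case M of (d, Z, X) \<Rightarrow>
     Z \<in> carrier_mat d d \<and> X \<in> carrier_mat d d \<and>
     Z ^\<^sub>m (2*n+1) = Z \<and> Z * X = q \<cdot>\<^sub>m (X * Z) \<and> X * X = 0\<^sub>m d d)"

definition submod :: "'k::field rep \<Rightarrow> 'k vec set \<Rightarrow> bool" where
  "submod M U \<longleftrightarrow> (case M of (d, Z, X) \<Rightarrow>
     U \<subseteq> carrier_vec d \<and> 0\<^sub>v d \<in> U \<and>
     (\<forall>u\<in>U. \<forall>v\<in>U. u + v \<in> U) \<and> (\<forall>c. \<forall>u\<in>U. c \<cdot>\<^sub>v u \<in> U) \<and>
     (\<forall>u\<in>U. Z *\<^sub>v u \<in> U) \<and> (\<forall>u\<in>U. X *\<^sub>v u \<in> U))"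

definition indecomposable :: "'k::field rep \<Rightarrow> bool" where
  "indecomposable M \<longleftrightarrow> fst M > 0 \<and>
     \<not> (\<exists>U W. submod M U \<and> submod M W \<and> U \<noteq> {0\<^sub>v (fst M)} \<and> W \<noteq> {0\<^sub>v (fst M)} \<and>
           U \<inter> W = {0\<^sub>v (fst M)} \<and>
           (\<forall>v\<in>carrier_vec (fst M). \<exists>u\<in>U. \<exists>w\<in>W. v = u + w))"

definition mod_iso :: "'k::field rep \<Rightarrow> 'k rep \<Rightarrow> bool" where
  "mod_iso M N \<longleftrightarrow> (case M of (d, Z, X) \<Rightarrow> case N of (d', Z', X') \<Rightarrow>
     d = d' \<and> (\<exists>P \<in> carrier_mat d d. invertible_mat P \<and> P * Z = Z' * P \<and> P * X = X' * P))"

datatype idx = S nat | M nat | N0 | N1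

definition valid_idx :: "nat \<Rightarrow> idx \<Rightarrow> bool" where
  "valid_idx n j \<longleftrightarrow> (case j of S i \<Rightarrow> i < 2*n | M i \<Rightarrow> i < 2*n | _ \<Rightarrow> True)"

definition std_mod :: "'k::field \<Rightarrow> idx \<Rightarrow> 'k rep" where
  "std_mod q j = (case j of
     S i \<Rightarrow> (1, mat 1 1 (\<lambda>_. q ^ i), 0\<^sub>m 1 1)
   | M i \<Rightarrow> (2, mat 2 2 (\<lambda>(r,c). if r = c then q ^ (i + r) else 0),
                mat 2 2 (\<lambda>(r,c). if r = 1 \<and> c = 0 then 1 else 0))
   | N0 \<Rightarrow> (1, 0\<^sub>m 1 1, 0\<^sub>m 1 1)
   | N1 \<Rightarrow> (2, 0\<^sub>m 2 2, mat 2 2 (\<lambda>(r,c). if r = 1 \<and> c = 0 then 1 else 0)))"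

end

theory Submission
  imports Defs
begin

(* Since q^(2n) = 1, the power E = Z^(2n) commutes with X, and Z^(2n+1) = Z makes it idempotent;
   on an indecomposable module E is therefore 0 or 1, i.e. Z = 0 or Z^(2n) = 1.  In the second
   case averaging the powers of Z against the characters of the cyclic group generated by q
   (this needs characteristic 0) projects onto eigenvectors of Z, with eigenvalues powers of q.
   A weight vector v, chosen with X v <> 0 whenever X <> 0, together with a suitable dual weight
   functional psi spans a copy S of one of the listed modules with maps P : M -> S and
   Q : S -> M satisfying P Q = 1.  Then Q P is an idempotent endomorphism of M, hence 1, and
   M is isomorphic to S.  The listed modules are indecomposable since any two nonzero submodules
   meet (in M_i and N_1 they all contain the socle), and they are told apart by their dimension
   and the eigenvalue of Z on the top. *)

lemma eq_mat_on_vecI: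
  fixes A B :: "'a::semiring_1 mat"
  assumes A: "A \<in> carrier_mat nr nc" and B: "B \<in> carrier_mat nr nc"
    and eq: "\<And>v. v \<in> carrier_vec nc \<Longrightarrow> A *\<^sub>v v = B *\<^sub>v v"
  shows "A = B"
proof (rule eq_matI)
  fix i j assume ij: "i < dim_row B" "j < dim_col B"
  have "A $$ (i, j) = (A *\<^sub>v unit_vec nc j) $ i" using A B ij by simp
  also have "\<dots> = (B *\<^sub>v unit_vec nc j) $ i" using eq by simp
  also have "\<dots> = B $$ (i, j)" using B ij by simp
  finally show "A $$ (i, j) = B $$ (i, j)" .
qed (use A B in auto)

lemma zero_smult_vec [simp]: "(0 :: 'a::mult_zero) \<cdot>\<^sub>v v = 0\<^sub>v (dim_vec v)"
  by (intro eq_vecI) auto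

lemma zero_mat_mult_vec [simp]: "v \<in> carrier_vec nc \<Longrightarrow> (0\<^sub>m nr nc :: 'a::semiring_0 mat) *\<^sub>v v = 0\<^sub>v nr"
  by (intro eq_vecI) (auto simp: scalar_prod_def)

lemma smult_mat_mult_vec:
  fixes A :: "'a::comm_ring mat"
  assumes "A \<in> carrier_mat nr nc" and "v \<in> carrier_vec nc"
  shows "(k \<cdot>\<^sub>m A) *\<^sub>v v = k \<cdot>\<^sub>v (A *\<^sub>v v)"
  using assms by (intro eq_vecI) auto

lemma transpose_smult_mat: "transpose_mat (k \<cdot>\<^sub>m A) = k \<cdot>\<^sub>m transpose_mat A"
  by (intro eq_matI) auto

lemma exists_mult_vec_nonzero:
  fixes A :: "'a::semiring_1 mat"
  assumes "A \<in> carrier_mat nr nc" and "A \<noteq> 0\<^sub>m nr nc"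
  shows "\<exists>w\<in>carrier_vec nc. A *\<^sub>v w \<noteq> 0\<^sub>v nr"
  using assms eq_mat_on_vecI[of A nr nc "0\<^sub>m nr nc"] by force

lemma exists_dual_vector:
  fixes u :: "'k::field vec"
  assumes "u \<in> carrier_vec d" and "u \<noteq> 0\<^sub>v d"
  shows "\<exists>\<phi>\<in>carrier_vec d. \<phi> \<bullet> u = 1"
proof -
  obtain k where k: "k < d" "u $ k \<noteq> 0" using assms by (metis eq_vecI carrier_vecD index_zero_vec)
  have "(inverse (u $ k) \<cdot>\<^sub>v unit_vec d k) \<bullet> u = 1" using assms k by simp
  then show ?thesis by (intro bexI[of _ "inverse (u $ k) \<cdot>\<^sub>v unit_vec d k"]) auto
qed

lemma pow_mat_add:
  fixes A :: "'a::semiring_1 mat"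
  assumes A: "A \<in> carrier_mat n n"
  shows "A ^\<^sub>m k * A ^\<^sub>m l = A ^\<^sub>m (k + l)"
proof (induction l)
  case (Suc l)
  have "A ^\<^sub>m k * A ^\<^sub>m Suc l = (A ^\<^sub>m k * A ^\<^sub>m l) * A"
    using assoc_mult_mat[of "A ^\<^sub>m k" n n "A ^\<^sub>m l" n A n] A by simp
  then show ?case using Suc by simp
qed (use A in simp)

lemma pow_mat_Suc_left:
  fixes A :: "'a::semiring_1 mat"
  assumes "A \<in> carrier_mat n n"
  shows "A ^\<^sub>m Suc k = A * A ^\<^sub>m k"
  using pow_mat_add[OF assms, of 1 k] assms by simp

lemma pow_mat_idempotent:
  fixes Z :: "'a::semiring_1 mat"
  assumes Z: "Z \<in> carrier_mat d d" and period: "Z ^\<^sub>m Suc m = Z"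
  shows "Z ^\<^sub>m m * Z ^\<^sub>m m = Z ^\<^sub>m m"
proof (cases m)
  case (Suc k)
  have "Z ^\<^sub>m (Suc l + m) = Z ^\<^sub>m Suc l" for l
    by (induction l) (use period Z in simp_all)
  then show ?thesis using pow_mat_add[OF Z, of m m] Suc by simp
qed (use Z in simp)

lemma transpose_pow_mat:
  fixes A :: "'a::comm_semiring_1 mat"
  assumes A: "A \<in> carrier_mat n n"
  shows "transpose_mat (A ^\<^sub>m k) = transpose_mat A ^\<^sub>m k"
proof (induction k)
  case (Suc k)
  have "transpose_mat (A ^\<^sub>m Suc k) = transpose_mat A * transpose_mat (A ^\<^sub>m k)"
    using A by (simp add: transpose_mult[of _ n n _ n])
  then show ?case using Suc pow_mat_Suc_left[of "transpose_mat A" n k] A by simp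
qed (use A in simp)

lemma mat_diag_pow: "mat_diag n f ^\<^sub>m k = mat_diag n (\<lambda>i. f i ^ k)"
proof (induction k)
  case 0
  have "dim_row (mat_diag n f) = n" by (simp add: mat_diag_def)
  then show ?case by simp
qed (simp add: power_commutes)

definition mat_trace :: "'a::comm_semiring_1 mat \<Rightarrow> 'a" where
  "mat_trace A = (\<Sum>i<dim_row A. A $$ (i, i))"

lemma mat_trace_mult_comm:
  fixes A B :: "'a::comm_semiring_1 mat"
  assumes "A \<in> carrier_mat n m" and "B \<in> carrier_mat m n"
  shows "mat_trace (A * B) = mat_trace (B * A)"
proof -
  have "mat_trace (A * B) = (\<Sum>i<n. \<Sum>k<m. A $$ (i, k) * B $$ (k, i))"
    using assms by (auto simp: mat_trace_def scalar_prod_def atLeast0LessThan intro!: sum.cong)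
  also have "\<dots> = (\<Sum>k<m. \<Sum>i<n. B $$ (k, i) * A $$ (i, k))"
    by (subst sum.swap) (simp add: mult.commute)
  also have "\<dots> = mat_trace (B * A)"
    using assms by (auto simp: mat_trace_def scalar_prod_def atLeast0LessThan intro!: sum.cong)
  finally show ?thesis .
qed

lemma mat_trace_one [simp]: "mat_trace (1\<^sub>m n) = of_nat n"
  by (simp add: mat_trace_def)

lemma mat_trace_zero [simp]: "mat_trace (0\<^sub>m n n) = 0"
  by (simp add: mat_trace_def)

lemma invertible_mat_row_nonzero:
  fixes P :: "'a::semiring_1 mat"
  assumes "invertible_mat P" and P: "P \<in> carrier_mat n n" and i: "i < n"
  shows "\<exists>j<n. P $$ (i, j) \<noteq> 0"
proof -
  obtain B where PB: "P * B = 1\<^sub>m n" and BP: "B * P = 1\<^sub>m (dim_row B)"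
    using assms unfolding invertible_mat_def inverts_mat_def by auto
  have "dim_row B = n" using BP P by (metis carrier_matD(2) index_mult_mat(3) index_one_mat(3))
  moreover have "dim_col B = n" using PB by (metis index_mult_mat(3) index_one_mat(3))
  ultimately have "(\<Sum>j<n. P $$ (i, j) * B $$ (j, i)) = 1"
    using arg_cong[OF PB, of "\<lambda>C. C $$ (i, i)"] P i
    by (auto simp: scalar_prod_def atLeast0LessThan)
  then show ?thesis
    by (metis (no_types, lifting) mult_not_zero sum.neutral zero_neq_one lessThan_iff)
qed

lemma mat_of_rows_mult:
  fixes A :: "'a::comm_semiring_0 mat"
  assumes A: "A \<in> carrier_mat d k" and \<phi>s: "set \<phi>s \<subseteq> carrier_vec d"
  shows "mat_of_rows d \<phi>s * A = mat_of_rows k (map (\<lambda>\<phi>. transpose_mat A *\<^sub>v \<phi>) \<phi>s)"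
    (is "_ = ?R")
proof (rule eq_matI)
  fix i j assume ij: "i < dim_row ?R" "j < dim_col ?R"
  then have "\<phi>s ! i \<in> carrier_vec d" using \<phi>s by auto
  then show "(mat_of_rows d \<phi>s * A) $$ (i, j) = ?R $$ (i, j)"
    using A ij by (auto simp: mat_of_rows_index comm_scalar_prod[of _ d])
qed (use A in auto)

lemma mult_mat_of_cols:
  fixes A :: "'a::semiring_0 mat"
  assumes A: "A \<in> carrier_mat k d" and vs: "set vs \<subseteq> carrier_vec d"
  shows "A * mat_of_cols d vs = mat_of_cols k (map (\<lambda>v. A *\<^sub>v v) vs)" (is "_ = ?R")
proof (rule eq_matI)
  fix i j assume ij: "i < dim_row ?R" "j < dim_col ?R"
  then have "vs ! j \<in> carrier_vec d" using vs by auto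
  then show "(A * mat_of_cols d vs) $$ (i, j) = ?R $$ (i, j)"
    using A ij by (auto simp: mat_of_cols_index)
qed (use A in auto)

lemma mat_diag_mult_mat_of_rows:
  fixes f :: "nat \<Rightarrow> 'a::comm_semiring_1"
  assumes "length \<phi>s = k" "set \<phi>s \<subseteq> carrier_vec d"
  shows "mat_diag k f * mat_of_rows d \<phi>s = mat_of_rows d (map (\<lambda>i. f i \<cdot>\<^sub>v \<phi>s ! i) [0..<k])"
proof -
  have "dim_vec (\<phi>s ! i) = d" if "i < k" for i
    using assms that by (metis carrier_vecD nth_mem subsetD)
  then show ?thesis
    using assms
    by (subst mat_diag_mult_left[of _ k d]) (auto simp: mat_of_rows_index intro!: eq_matI)
qed

lemma mat_of_cols_mult_mat_diag:
  fixes f :: "nat \<Rightarrow> 'a::comm_semiring_1"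
  assumes "length vs = k" "set vs \<subseteq> carrier_vec d"
  shows "mat_of_cols d vs * mat_diag k f = mat_of_cols d (map (\<lambda>j. f j \<cdot>\<^sub>v vs ! j) [0..<k])"
proof -
  have "dim_vec (vs ! j) = d" if "j < k" for j
    using assms that by (metis carrier_vecD nth_mem subsetD)
  then show ?thesis
    using assms
    by (subst mat_diag_mult_right[of _ d k])
      (auto simp: mat_of_cols_index mult.commute intro!: eq_matI)
qed

section \<open>The commutation relation\<close>

lemma pow_mat_commutation:
  fixes Z X :: "'a::comm_ring_1 mat"
  assumes Z: "Z \<in> carrier_mat d d" and X: "X \<in> carrier_mat d d" and ZX: "Z * X = q \<cdot>\<^sub>m (X * Z)"
  shows "Z ^\<^sub>m k * X = q ^ k \<cdot>\<^sub>m (X * Z ^\<^sub>m k)"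
proof (induction k)
  case 0
  then show ?case using X Z by (intro eq_matI) auto
next
  case (Suc k)
  have Zk: "Z ^\<^sub>m k \<in> carrier_mat d d" using Z by simp
  have "Z ^\<^sub>m Suc k * X = Z ^\<^sub>m k * (q \<cdot>\<^sub>m (X * Z))"
    using assoc_mult_mat[OF Zk Z X] ZX by simp
  also have "\<dots> = q \<cdot>\<^sub>m ((Z ^\<^sub>m k * X) * Z)"
    using mult_smult_distrib[OF Zk mult_carrier_mat[OF X Z]] assoc_mult_mat[OF Zk X Z] by simp
  also have "\<dots> = q \<cdot>\<^sub>m (q ^ k \<cdot>\<^sub>m (X * Z ^\<^sub>m Suc k))"
    unfolding Suc
    using mult_smult_assoc_mat[OF mult_carrier_mat[OF X Zk] Z] assoc_mult_mat[OF X Zk Z] by simp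
  also have "\<dots> = q ^ Suc k \<cdot>\<^sub>m (X * Z ^\<^sub>m Suc k)" by (intro eq_matI) auto
  finally show ?case .
qed

lemma eigenvector_shift:
  fixes Z X :: "'k::field mat"
  assumes Z: "Z \<in> carrier_mat d d" and X: "X \<in> carrier_mat d d" and ZX: "Z * X = q \<cdot>\<^sub>m (X * Z)"
    and v: "v \<in> carrier_vec d" and Zv: "Z *\<^sub>v v = c \<cdot>\<^sub>v v"
  shows "Z *\<^sub>v (X *\<^sub>v v) = (c * q) \<cdot>\<^sub>v (X *\<^sub>v v)"
proof -
  have "Z *\<^sub>v (X *\<^sub>v v) = (q \<cdot>\<^sub>m (X * Z)) *\<^sub>v v" using Z X v ZX by (simp flip: assoc_mult_mat_vec)
  also have "\<dots> = q \<cdot>\<^sub>v (X *\<^sub>v (c \<cdot>\<^sub>v v))"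
    using Z X v Zv smult_mat_mult_vec[of "X * Z" d d v q] by simp
  also have "\<dots> = (c * q) \<cdot>\<^sub>v (X *\<^sub>v v)"
    using X v by (simp add: mult_mat_vec smult_smult_assoc mult.commute)
  finally show ?thesis .
qed

lemma transpose_commutation:
  fixes Z X :: "'k::field mat"
  assumes Z: "Z \<in> carrier_mat d d" and X: "X \<in> carrier_mat d d"
    and ZX: "Z * X = q \<cdot>\<^sub>m (X * Z)" and q: "q \<noteq> 0"
  shows "transpose_mat Z * transpose_mat X = inverse q \<cdot>\<^sub>m (transpose_mat X * transpose_mat Z)"
proof -
  have "transpose_mat X * transpose_mat Z = q \<cdot>\<^sub>m (transpose_mat Z * transpose_mat X)"
    using arg_cong[OF ZX, of transpose_mat] X Z
    by (simp add: transpose_mult[of _ d d _ d] transpose_smult_mat)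
  then show ?thesis using q X Z by (intro eq_matI) auto
qed

section \<open>Idempotent endomorphisms and direct summands\<close>

lemma submod_eigenspace:
  fixes F Z X :: "'k::field mat"
  assumes F: "F \<in> carrier_mat d d" and Z: "Z \<in> carrier_mat d d" and X: "X \<in> carrier_mat d d"
    and FZ: "F * Z = Z * F" and FX: "F * X = X * F"
  shows "submod (d, Z, X) {v \<in> carrier_vec d. F *\<^sub>v v = c \<cdot>\<^sub>v v}"
proof -
  have commute: "F *\<^sub>v (A *\<^sub>v v) = c \<cdot>\<^sub>v (A *\<^sub>v v)"
    if A: "A \<in> carrier_mat d d" and FA: "F * A = A * F"
      and v: "v \<in> carrier_vec d" and Fv: "F *\<^sub>v v = c \<cdot>\<^sub>v v" for A v
  proof -
    have "F *\<^sub>v (A *\<^sub>v v) = A *\<^sub>v (F *\<^sub>v v)"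
      using F A v FA by (metis assoc_mult_mat_vec)
    then show ?thesis using A v Fv by (simp add: mult_mat_vec)
  qed
  show ?thesis
    unfolding submod_def using F Z X FZ FX
    by (auto simp: mult_add_distrib_mat_vec mult_mat_vec smult_add_distrib_vec[of _ d]
        smult_smult_assoc mult.commute commute)
qed

lemma indecomposable_idempotent:
  fixes E Z X :: "'k::field mat"
  assumes ind: "indecomposable (d, Z, X)"
    and E: "E \<in> carrier_mat d d" and Z: "Z \<in> carrier_mat d d" and X: "X \<in> carrier_mat d d"
    and EE: "E * E = E" and EZ: "E * Z = Z * E" and EX: "E * X = X * E"
  shows "E = 0\<^sub>m d d \<or> E = 1\<^sub>m d"
proof -
  define U where "U = {v \<in> carrier_vec d. E *\<^sub>v v = 1 \<cdot>\<^sub>v v}"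
  define W where "W = {v \<in> carrier_vec d. E *\<^sub>v v = 0 \<cdot>\<^sub>v v}"
  have EEv: "E *\<^sub>v (E *\<^sub>v v) = E *\<^sub>v v" if "v \<in> carrier_vec d" for v
    using that E EE by (metis assoc_mult_mat_vec)
  have image_in_U: "E *\<^sub>v v \<in> U" if "v \<in> carrier_vec d" for v
    using that E EEv by (simp add: U_def)
  have kernel_part_in_W: "v - E *\<^sub>v v \<in> W" if "v \<in> carrier_vec d" for v
    using that E EEv by (auto simp: W_def mult_minus_distrib_mat_vec intro!: eq_vecI)
  have "U \<inter> W = {0\<^sub>v d}" using E by (auto simp: U_def W_def)
  moreover have "\<forall>v\<in>carrier_vec d. \<exists>u\<in>U. \<exists>w\<in>W. v = u + w"
  proof
    fix v :: "'k vec" assume v: "v \<in> carrier_vec d"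
    have "v = E *\<^sub>v v + (v - E *\<^sub>v v)" using v E by (intro eq_vecI) auto
    then show "\<exists>u\<in>U. \<exists>w\<in>W. v = u + w" using image_in_U[OF v] kernel_part_in_W[OF v] by blast
  qed
  moreover have "submod (d, Z, X) U" "submod (d, Z, X) W"
    unfolding U_def W_def using submod_eigenspace[OF E Z X EZ EX] by blast+
  ultimately have "U = {0\<^sub>v d} \<or> W = {0\<^sub>v d}"
    using ind unfolding indecomposable_def fst_conv by blast
  then show ?thesis
  proof
    assume "U = {0\<^sub>v d}"
    then have "E = 0\<^sub>m d d" using image_in_U by (intro eq_mat_on_vecI[OF E]) auto
    then show ?thesis ..
  next
    assume W0: "W = {0\<^sub>v d}"
    have "E *\<^sub>v v = 1\<^sub>m d *\<^sub>v v" if v: "v \<in> carrier_vec d" for v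
    proof -
      have "v - E *\<^sub>v v = 0\<^sub>v d" using kernel_part_in_W[OF v] W0 by blast
      then have "E *\<^sub>v v = v"
        using v E by (metis carrier_vecD dim_mult_mat_vec carrier_matD(1) index_minus_vec(1)
            index_zero_vec(1) eq_vecI right_minus_eq)
      then show ?thesis using v by simp
    qed
    then have "E = 1\<^sub>m d" by (intro eq_mat_on_vecI[OF E]) auto
    then show ?thesis ..
  qed
qed

lemma intertwiner_composite_commute:
  fixes A A' P Q :: "'a::semiring_1 mat"
  assumes A: "A \<in> carrier_mat d d" and A': "A' \<in> carrier_mat m m"
    and P: "P \<in> carrier_mat m d" and Q: "Q \<in> carrier_mat d m"
    and PA: "P * A = A' * P" and AQ: "A * Q = Q * A'"
  shows "Q * P * A = A * (Q * P)"
proof -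
  have "Q * P * A = Q * (P * A)" by (rule assoc_mult_mat[OF Q P A])
  also have "\<dots> = Q * A' * P" unfolding PA by (rule assoc_mult_mat[OF Q A' P, symmetric])
  also have "\<dots> = A * Q * P" unfolding AQ ..
  also have "\<dots> = A * (Q * P)" by (rule assoc_mult_mat[OF A Q P])
  finally show ?thesis .
qed

lemma indecomposable_retract_mod_iso:
  fixes Z X P Q Z' X' :: "'k::field_char_0 mat"
  assumes ind: "indecomposable (d, Z, X)"
    and Z: "Z \<in> carrier_mat d d" and X: "X \<in> carrier_mat d d"
    and Z': "Z' \<in> carrier_mat m m" and X': "X' \<in> carrier_mat m m"
    and P: "P \<in> carrier_mat m d" and Q: "Q \<in> carrier_mat d m"
    and m: "0 < m" and PQ: "P * Q = 1\<^sub>m m"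
    and PZ: "P * Z = Z' * P" and PX: "P * X = X' * P"
    and ZQ: "Z * Q = Q * Z'" and XQ: "X * Q = Q * X'"
  shows "mod_iso (d, Z, X) (m, Z', X')"
proof -
  have QP: "Q * P \<in> carrier_mat d d" using P Q by simp
  have "Q * P * (Q * P) = Q * (P * Q * P)"
    using assoc_mult_mat[OF Q P QP] assoc_mult_mat[OF P Q P] by simp
  then have idem: "Q * P * (Q * P) = Q * P" using P PQ by simp
  note QPZ = intertwiner_composite_commute[OF Z Z' P Q PZ ZQ]
  note QPX = intertwiner_composite_commute[OF X X' P Q PX XQ]
  (* In characteristic 0 the trace excludes Q P = 0 and forces d = m. *)
  have trace_QP: "mat_trace (Q * P) = of_nat m"
    using mat_trace_mult_comm[OF Q P] PQ by simp
  then have "Q * P = 1\<^sub>m d"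
    using indecomposable_idempotent[OF ind QP Z X idem QPZ QPX] m by auto
  moreover have "d = m" using trace_QP calculation by simp
  ultimately have "invertible_mat P"
    using P Q PQ unfolding invertible_mat_def inverts_mat_def square_mat.simps
    by (intro conjI exI[of _ Q]) auto
  then show ?thesis unfolding mod_iso_def using \<open>d = m\<close> P PZ PX by auto
qed

section \<open>Weight vectors of a periodic matrix\<close>

lemma power_power_eq_one: "q ^ m = 1 \<Longrightarrow> (q ^ i) ^ m = (1 :: 'a::comm_monoid_mult)"
  by (simp add: power_mult[symmetric] mult.commute[of i] power_mult)

lemma primitive_root_nonzero:
  assumes "primitive_root N q" and "0 < N"
  shows "q \<noteq> 0"
  using assms unfolding primitive_root_def by (cases "q = 0") (auto simp: zero_power)

lemma primitive_root_power_inj: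
  fixes q :: "'k::field"
  assumes q: "primitive_root N q" and ij: "i < N" "j < N" and eq: "q ^ i = q ^ j"
  shows "i = j"
proof -
  have q0: "q \<noteq> 0" using primitive_root_nonzero[OF q] ij by simp
  have no_repeat: False if ab: "a < b" "b < N" "q ^ a = q ^ b" for a b
  proof -
    have "a + (b - a) = b" using ab by simp
    then have "q ^ a * q ^ (b - a) = q ^ a * 1" using ab(3) by (metis power_add mult_1_right)
    then have "q ^ (b - a) = 1" using q0 by simp
    then show False using q ab unfolding primitive_root_def by simp
  qed
  show ?thesis
  proof (rule linorder_cases[of i j])
    assume "i < j"
    then show ?thesis using no_repeat[of i j] ij eq by simp
  next
    assume "j < i"
    then show ?thesis using no_repeat[of j i] ij eq by simp
  qed
qed

lemma primitive_root_power_sum: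
  fixes q :: "'k::field"
  assumes q: "primitive_root N q" and j: "j < N"
  shows "(\<Sum>i<N. inverse (q ^ i) ^ j) = (if j = 0 then of_nat N else 0)"
proof (cases "j = 0")
  case False
  define x where "x = inverse (q ^ j)"
  have "inverse (q ^ i) ^ j = x ^ i" for i
    by (simp add: x_def power_inverse[symmetric] power_mult[symmetric] mult.commute)
  moreover have "x \<noteq> 1" using q False j by (simp add: x_def primitive_root_def)
  moreover have "x ^ N = 1"
    using q power_power_eq_one[of q N j] by (simp add: x_def primitive_root_def power_inverse)
  ultimately show ?thesis using False by (simp add: sum_gp_strict)
qed simp

(* For A^N = 1 and r^N = 1 this is N times the projection of w onto the r-eigenspace of A. *)
definition weight_proj :: "'k::field mat \<Rightarrow> nat \<Rightarrow> 'k \<Rightarrow> 'k vec \<Rightarrow> 'k vec" where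
  "weight_proj A N r w = vec (dim_row A) (\<lambda>a. \<Sum>j<N. inverse r ^ j * (A ^\<^sub>m j *\<^sub>v w) $ a)"

lemma dim_weight_proj [simp]: "dim_vec (weight_proj A N r w) = dim_row A"
  by (simp add: weight_proj_def)

lemma weight_proj_carrier [simp]: "A \<in> carrier_mat d d \<Longrightarrow> weight_proj A N r w \<in> carrier_vec d"
  by (intro carrier_vecI) (simp add: carrier_matD)

lemma scalar_prod_weight_proj:
  fixes A :: "'k::field mat"
  assumes A: "A \<in> carrier_mat d d" and \<phi>: "\<phi> \<in> carrier_vec d" and w: "w \<in> carrier_vec d"
  shows "\<phi> \<bullet> weight_proj A N r w = (\<Sum>j<N. inverse r ^ j * (\<phi> \<bullet> (A ^\<^sub>m j *\<^sub>v w)))"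
proof -
  have "\<phi> \<bullet> weight_proj A N r w
      = (\<Sum>a\<in>{0..<d}. \<Sum>j<N. inverse r ^ j * (\<phi> $ a * (A ^\<^sub>m j *\<^sub>v w) $ a))"
    using A by (simp add: weight_proj_def scalar_prod_def sum_distrib_left mult.left_commute)
  also have "\<dots> = (\<Sum>j<N. \<Sum>a\<in>{0..<d}. inverse r ^ j * (\<phi> $ a * (A ^\<^sub>m j *\<^sub>v w) $ a))"
    by (rule sum.swap)
  also have "\<dots> = (\<Sum>j<N. inverse r ^ j * (\<phi> \<bullet> (A ^\<^sub>m j *\<^sub>v w)))"
    using A w by (simp add: scalar_prod_def sum_distrib_left)
  finally show ?thesis .
qed

lemma periodic_sum_shift:
  fixes c :: "'a::comm_ring_1"
  assumes "g N = g 0" and "c ^ N = 1"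
  shows "c * (\<Sum>j<N. c ^ j * g (Suc j)) = (\<Sum>j<N. c ^ j * g j)"
proof -
  have "c * (\<Sum>j<N. c ^ j * g (Suc j)) + c ^ 0 * g 0 = (\<Sum>j<Suc N. c ^ j * g j)"
    by (subst sum.lessThan_Suc_shift) (simp add: sum_distrib_left mult.assoc add.commute)
  then show ?thesis using assms by simp
qed

lemma weight_proj_eigen:
  fixes A :: "'k::field mat"
  assumes A: "A \<in> carrier_mat d d" and w: "w \<in> carrier_vec d"
    and AN: "A ^\<^sub>m N = 1\<^sub>m d" and rN: "r ^ N = 1" and N: "0 < N"
  shows "A *\<^sub>v weight_proj A N r w = r \<cdot>\<^sub>v weight_proj A N r w"
proof (rule eq_vecI)
  fix a assume "a < dim_vec (r \<cdot>\<^sub>v weight_proj A N r w)"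
  then have a: "a < d" using A by simp
  have r0: "r \<noteq> 0" using rN N by (cases "r = 0") (auto simp: zero_power)
  have row: "row A a \<in> carrier_vec d" using A by auto
  have shift: "row A a \<bullet> (A ^\<^sub>m j *\<^sub>v w) = (A ^\<^sub>m Suc j *\<^sub>v w) $ a" for j
    unfolding pow_mat_Suc_left[OF A] using assoc_mult_mat_vec[OF A pow_carrier_mat[OF A] w] A a
    by simp
  have "(A *\<^sub>v weight_proj A N r w) $ a = row A a \<bullet> weight_proj A N r w" using A a by simp
  also have "\<dots> = (\<Sum>j<N. inverse r ^ j * (A ^\<^sub>m Suc j *\<^sub>v w) $ a)"
    using scalar_prod_weight_proj[OF A row w, of N r] by (simp only: shift)
  also have "\<dots> = r * (inverse r * (\<Sum>j<N. inverse r ^ j * (A ^\<^sub>m Suc j *\<^sub>v w) $ a))"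
    using r0 by simp
  also have "\<dots> = r * (\<Sum>j<N. inverse r ^ j * (A ^\<^sub>m j *\<^sub>v w) $ a)"
    using periodic_sum_shift[of "\<lambda>j. (A ^\<^sub>m j *\<^sub>v w) $ a" N "inverse r"] AN A w rN
    by (simp add: power_inverse)
  also have "\<dots> = (r \<cdot>\<^sub>v weight_proj A N r w) $ a" using A a by (simp add: weight_proj_def)
  finally show "(A *\<^sub>v weight_proj A N r w) $ a = (r \<cdot>\<^sub>v weight_proj A N r w) $ a" .
qed (use A in simp)

lemma sum_scalar_prod_weight_proj:
  fixes A :: "'k::field mat"
  assumes A: "A \<in> carrier_mat d d" and \<phi>: "\<phi> \<in> carrier_vec d" and w: "w \<in> carrier_vec d"
    and q: "primitive_root N q" and N: "0 < N"
  shows "(\<Sum>i<N. \<phi> \<bullet> weight_proj A N (q ^ i) w) = of_nat N * (\<phi> \<bullet> w)"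
proof -
  have "(\<Sum>i<N. \<phi> \<bullet> weight_proj A N (q ^ i) w)
      = (\<Sum>j<N. (\<Sum>i<N. inverse (q ^ i) ^ j) * (\<phi> \<bullet> (A ^\<^sub>m j *\<^sub>v w)))"
  proof -
    have "(\<Sum>i<N. \<phi> \<bullet> weight_proj A N (q ^ i) w)
        = (\<Sum>i<N. \<Sum>j<N. inverse (q ^ i) ^ j * (\<phi> \<bullet> (A ^\<^sub>m j *\<^sub>v w)))"
      using A \<phi> w by (simp add: scalar_prod_weight_proj)
    also have "\<dots> = (\<Sum>j<N. \<Sum>i<N. inverse (q ^ i) ^ j * (\<phi> \<bullet> (A ^\<^sub>m j *\<^sub>v w)))"
      by (rule sum.swap)
    finally show ?thesis by (simp add: sum_distrib_right)
  qed
  also have "\<dots> = (\<Sum>j<N. (if j = 0 then of_nat N * (\<phi> \<bullet> (A ^\<^sub>m j *\<^sub>v w)) else 0))"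
    using primitive_root_power_sum[OF q] by (intro sum.cong) auto
  also have "\<dots> = of_nat N * (\<phi> \<bullet> w)" using N A w by (simp add: sum.delta)
  finally show ?thesis .
qed

lemma exists_weight_vector:
  fixes A :: "'k::field_char_0 mat" and q :: 'k
  assumes A: "A \<in> carrier_mat d d" and AN: "A ^\<^sub>m N = 1\<^sub>m d"
    and q: "primitive_root N q" and N: "0 < N"
    and \<phi>: "\<phi> \<in> carrier_vec d" and w: "w \<in> carrier_vec d" and \<phi>w: "\<phi> \<bullet> w \<noteq> 0"
  shows "\<exists>i<N. \<exists>v\<in>carrier_vec d. A *\<^sub>v v = q ^ i \<cdot>\<^sub>v v \<and> \<phi> \<bullet> v \<noteq> 0"
proof -
  have "(\<Sum>i<N. \<phi> \<bullet> weight_proj A N (q ^ i) w) \<noteq> 0"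
    using sum_scalar_prod_weight_proj[OF A \<phi> w q N] N \<phi>w by simp
  then obtain i where i: "i < N" "\<phi> \<bullet> weight_proj A N (q ^ i) w \<noteq> 0"
    using sum.not_neutral_contains_not_neutral by blast
  have "(q ^ i) ^ N = 1" using q power_power_eq_one by (auto simp: primitive_root_def)
  then have "A *\<^sub>v weight_proj A N (q ^ i) w = q ^ i \<cdot>\<^sub>v weight_proj A N (q ^ i) w"
    using weight_proj_eigen[OF A w AN _ N] by blast
  with i show ?thesis using weight_proj_carrier[OF A] by blast
qed

lemma exists_dual_weight_vector:
  fixes A :: "'k::field_char_0 mat" and q :: 'k
  assumes A: "A \<in> carrier_mat d d" and AN: "A ^\<^sub>m N = 1\<^sub>m d"
    and q: "primitive_root N q" and N: "0 < N"
    and u: "u \<in> carrier_vec d" "u \<noteq> 0\<^sub>v d" and Au: "A *\<^sub>v u = \<mu> \<cdot>\<^sub>v u"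
  shows "\<exists>\<psi>\<in>carrier_vec d. transpose_mat A *\<^sub>v \<psi> = \<mu> \<cdot>\<^sub>v \<psi> \<and> \<psi> \<bullet> u = 1"
proof -
  have At: "transpose_mat A \<in> carrier_mat d d" using A by simp
  have AtN: "transpose_mat A ^\<^sub>m N = 1\<^sub>m d" using transpose_pow_mat[OF A, of N] AN by simp
  obtain \<phi> where \<phi>: "\<phi> \<in> carrier_vec d" "\<phi> \<bullet> u = 1" using exists_dual_vector[OF u] by blast
  have "u \<bullet> \<phi> \<noteq> 0" using \<phi> u comm_scalar_prod[of u d \<phi>] by simp
  then obtain i \<psi>0 where \<psi>0: "\<psi>0 \<in> carrier_vec d" "transpose_mat A *\<^sub>v \<psi>0 = q ^ i \<cdot>\<^sub>v \<psi>0"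
    and "u \<bullet> \<psi>0 \<noteq> 0"
    using exists_weight_vector[OF At AtN q N u(1) \<phi>(1)] by blast
  then have \<psi>0u: "\<psi>0 \<bullet> u \<noteq> 0" using u comm_scalar_prod[of u d \<psi>0] by simp
  have "q ^ i * (\<psi>0 \<bullet> u) = (transpose_mat A *\<^sub>v \<psi>0) \<bullet> u" using \<psi>0 u by simp
  also have "\<dots> = \<psi>0 \<bullet> (A *\<^sub>v u)" by (rule transpose_vec_mult_scalar[OF A u(1) \<psi>0(1)])
  also have "\<dots> = \<mu> * (\<psi>0 \<bullet> u)" using Au \<psi>0 u by simp
  finally have "q ^ i = \<mu>" using \<psi>0u by simp
  define \<psi> where "\<psi> = inverse (\<psi>0 \<bullet> u) \<cdot>\<^sub>v \<psi>0"
  have "transpose_mat A *\<^sub>v \<psi> = \<mu> \<cdot>\<^sub>v \<psi>"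
    unfolding \<psi>_def mult_mat_vec[OF At \<psi>0(1)] \<psi>0(2) \<open>q ^ i = \<mu>\<close>
    by (simp add: smult_smult_assoc mult.commute)
  moreover have "\<psi> \<bullet> u = 1" using \<psi>0 u \<psi>0u by (simp add: \<psi>_def)
  moreover have "\<psi> \<in> carrier_vec d" using \<psi>0 by (simp add: \<psi>_def)
  ultimately show ?thesis by blast
qed

section \<open>The listed modules\<close>

definition shift_mat2 :: "'a::semiring_1 mat" where
  "shift_mat2 = mat 2 2 (\<lambda>(r, c). if r = 1 \<and> c = 0 then 1 else 0)"

definition one_dim_mod :: "'k::field \<Rightarrow> 'k rep" where
  "one_dim_mod c = (1, mat_diag 1 (\<lambda>_. c), 0\<^sub>m 1 1)"

definition two_dim_mod :: "'k::field \<Rightarrow> 'k \<Rightarrow> 'k rep" where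
  "two_dim_mod q c = (2, mat_diag 2 (\<lambda>r. c * q ^ r), shift_mat2)"

lemma shift_mat2_carrier [simp]: "shift_mat2 \<in> carrier_mat 2 2"
  by (simp add: shift_mat2_def)

lemma shift_mat2_mult_mat_of_rows:
  assumes "\<phi> \<in> carrier_vec d" "\<psi> \<in> carrier_vec d"
  shows "shift_mat2 * mat_of_rows d [\<phi>, \<psi>] = mat_of_rows d [0\<^sub>v d, \<phi>]"
  using assms
  by (intro eq_matI) (auto simp: shift_mat2_def scalar_prod_def mat_of_rows_index less_Suc_eq
      numeral_2_eq_2)

lemma mat_of_cols_mult_shift_mat2:
  assumes "v \<in> carrier_vec d" "u \<in> carrier_vec d"
  shows "mat_of_cols d [v, u] * shift_mat2 = mat_of_cols d [u, 0\<^sub>v d]"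
  using assms
  by (intro eq_matI) (auto simp: shift_mat2_def scalar_prod_def mat_of_cols_index less_Suc_eq
      numeral_2_eq_2)

lemma std_mod_eq:
  "std_mod q (S i) = one_dim_mod (q ^ i)"
  "std_mod q (M i) = two_dim_mod q (q ^ i)"
  "std_mod q N0 = one_dim_mod 0"
  "std_mod q N1 = two_dim_mod q 0"
  by (auto simp: std_mod_def one_dim_mod_def two_dim_mod_def shift_mat2_def mat_diag_def power_add
      intro!: eq_matI)

lemma is_wH_mod_one_dim_mod:
  fixes c :: "'k::field"
  assumes "c ^ (2 * n + 1) = c"
  shows "is_wH_mod n q (one_dim_mod c)"
proof -
  have "mat_diag 1 (\<lambda>_. c) ^\<^sub>m (2 * n + 1) = mat_diag 1 (\<lambda>_. c)"
    by (simp only: mat_diag_pow assms)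
  moreover have "mat_diag 1 (\<lambda>_. c) * 0\<^sub>m 1 1 = q \<cdot>\<^sub>m (0\<^sub>m 1 1 * mat_diag 1 (\<lambda>_. c))"
    by (intro eq_matI) (auto simp: mat_diag_def scalar_prod_def)
  ultimately show ?thesis by (simp add: is_wH_mod_def one_dim_mod_def)
qed

lemma is_wH_mod_two_dim_mod:
  fixes q c :: "'k::field"
  assumes q: "q ^ (2 * n) = 1" and c: "c ^ (2 * n + 1) = c"
  shows "is_wH_mod n q (two_dim_mod q c)"
proof -
  have "(c * q ^ r) ^ (2 * n + 1) = c * q ^ r" for r
  proof -
    have "(c * q ^ r) ^ (2 * n + 1) = c ^ (2 * n + 1) * ((q ^ r) ^ (2 * n) * q ^ r)"
      by (simp add: power_mult_distrib mult_ac)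
    also have "(q ^ r) ^ (2 * n) = 1" using q by (rule power_power_eq_one)
    finally show ?thesis by (simp only: c mult_1)
  qed
  then have "mat_diag 2 (\<lambda>r. c * q ^ r) ^\<^sub>m (2 * n + 1) = mat_diag 2 (\<lambda>r. c * q ^ r)"
    by (simp only: mat_diag_pow)
  moreover have
    "mat_diag 2 (\<lambda>r. c * q ^ r) * shift_mat2 = q \<cdot>\<^sub>m (shift_mat2 * mat_diag 2 (\<lambda>r. c * q ^ r))"
    by (intro eq_matI) (auto simp: mat_diag_def shift_mat2_def scalar_prod_def less_2_cases_iff
        numeral_2_eq_2)
  moreover have "shift_mat2 * shift_mat2 = (0\<^sub>m 2 2 :: 'k mat)"
    by (intro eq_matI) (auto simp: shift_mat2_def scalar_prod_def less_2_cases_iff numeral_2_eq_2)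
  ultimately show ?thesis by (simp add: is_wH_mod_def two_dim_mod_def)
qed

lemma indecomposable_if_submods_meet:
  assumes "0 < d"
    and "\<And>U W. submod (d, Z, X) U \<Longrightarrow> submod (d, Z, X) W \<Longrightarrow> U \<noteq> {0\<^sub>v d} \<Longrightarrow> W \<noteq> {0\<^sub>v d}
      \<Longrightarrow> U \<inter> W \<noteq> {0\<^sub>v d}"
  shows "indecomposable (d, Z, X)"
  using assms unfolding indecomposable_def by auto

lemma indecomposable_dim1: "indecomposable (1, Z, X :: 'k::field mat)"
proof (rule indecomposable_if_submods_meet)
  fix U W assume U: "submod (1, Z, X) U" and W: "submod (1, Z, X) W"
    and "U \<noteq> {0\<^sub>v 1}" "W \<noteq> {0\<^sub>v 1}"
  obtain u where u: "u \<in> U" "u \<noteq> 0\<^sub>v 1" using U \<open>U \<noteq> {0\<^sub>v 1}\<close> by (auto simp: submod_def)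
  then have uc: "u \<in> carrier_vec 1" using U by (auto simp: submod_def)
  have "u $ 0 \<noteq> 0"
  proof
    assume "u $ 0 = 0"
    then have "u = 0\<^sub>v 1" using uc by (intro eq_vecI) auto
    with u(2) show False ..
  qed
  have "W \<subseteq> U"
  proof
    fix w assume "w \<in> W"
    then have w: "w \<in> carrier_vec 1" using W by (auto simp: submod_def)
    have "w = (w $ 0 / u $ 0) \<cdot>\<^sub>v u" using w uc \<open>u $ 0 \<noteq> 0\<close> by (intro eq_vecI) auto
    moreover have "(w $ 0 / u $ 0) \<cdot>\<^sub>v u \<in> U" using U u(1) by (simp add: submod_def)
    ultimately show "w \<in> U" by simp
  qed
  then show "U \<inter> W \<noteq> {0\<^sub>v 1}" using \<open>W \<noteq> {0\<^sub>v 1}\<close> by (simp add: Int_absorb1)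
qed simp

lemma submod_shift_mat2_socle:
  fixes Z :: "'k::field mat"
  assumes U: "submod (2, Z, shift_mat2) U" and u: "u \<in> U" "u \<noteq> 0\<^sub>v 2"
  shows "unit_vec 2 1 \<in> U"
proof -
  have uc: "u \<in> carrier_vec 2" and smult: "\<And>c u. u \<in> U \<Longrightarrow> c \<cdot>\<^sub>v u \<in> U"
    and shift: "\<And>u. u \<in> U \<Longrightarrow> shift_mat2 *\<^sub>v u \<in> U"
    using U u unfolding submod_def by auto
  show ?thesis
  proof (cases "u $ 0 = 0")
    case False
    have "unit_vec 2 1 = inverse (u $ 0) \<cdot>\<^sub>v (shift_mat2 *\<^sub>v u)"
      using uc False
      by (intro eq_vecI) (auto simp: shift_mat2_def scalar_prod_def less_Suc_eq numeral_2_eq_2)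
    then show ?thesis using smult shift u(1) by metis
  next
    case True
    have "u $ 1 \<noteq> 0"
    proof
      assume "u $ 1 = 0"
      then have "u = 0\<^sub>v 2" using uc True by (intro eq_vecI) (auto simp: less_2_cases_iff)
      with u(2) show False ..
    qed
    then have "unit_vec 2 1 = inverse (u $ 1) \<cdot>\<^sub>v u"
      using uc True by (intro eq_vecI) (auto simp: less_2_cases_iff)
    then show ?thesis using smult u(1) by metis
  qed
qed

lemma indecomposable_shift_mat2: "indecomposable (2, Z :: 'k::field mat, shift_mat2)"
proof (rule indecomposable_if_submods_meet)
  fix U W assume "submod (2, Z, shift_mat2) U" "submod (2, Z, shift_mat2) W"
    and "U \<noteq> {0\<^sub>v 2}" "W \<noteq> {0\<^sub>v 2}"
  then have "unit_vec 2 1 \<in> U \<inter> W" using submod_shift_mat2_socle unfolding submod_def by blast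
  moreover have "unit_vec 2 1 \<noteq> (0\<^sub>v 2 :: 'k vec)" by simp
  ultimately show "U \<inter> W \<noteq> {0\<^sub>v 2}" by blast
qed simp

lemma mod_iso_one_dim_mod_eq:
  fixes c c' :: "'k::field"
  assumes "mod_iso (one_dim_mod c) (one_dim_mod c')"
  shows "c = c'"
proof -
  obtain P where P: "P \<in> carrier_mat 1 1" "invertible_mat P"
    and PZ: "P * mat_diag 1 (\<lambda>_. c) = mat_diag 1 (\<lambda>_. c') * P"
    using assms unfolding mod_iso_def one_dim_mod_def by auto
  have "P $$ (0, 0) \<noteq> 0" using invertible_mat_row_nonzero[OF P(2,1), of 0] by auto
  moreover have "P $$ (0, 0) * c = c' * P $$ (0, 0)"
    using arg_cong[OF PZ, of "\<lambda>A. A $$ (0, 0)"] P(1)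
    by (simp add: mat_diag_def scalar_prod_def)
  ultimately show ?thesis by (simp add: mult.commute)
qed

lemma mod_iso_two_dim_mod_eq:
  fixes q c c' :: "'k::field"
  assumes "mod_iso (two_dim_mod q c) (two_dim_mod q c')"
  shows "c = c'"
proof -
  obtain P where P: "P \<in> carrier_mat 2 2" "invertible_mat P"
    and PZ: "P * mat_diag 2 (\<lambda>r. c * q ^ r) = mat_diag 2 (\<lambda>r. c' * q ^ r) * P"
    and PX: "P * shift_mat2 = shift_mat2 * P"
    using assms unfolding mod_iso_def two_dim_mod_def by auto
  have "P $$ (0, 1) = 0"
    using arg_cong[OF PX, of "\<lambda>A. A $$ (0, 0)"] P(1)
    by (simp add: shift_mat2_def scalar_prod_def numeral_2_eq_2)
  then have "P $$ (0, 0) \<noteq> 0"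
    using invertible_mat_row_nonzero[OF P(2,1), of 0] by (auto simp: less_2_cases_iff)
  moreover have "P $$ (0, 0) * c = c' * P $$ (0, 0)"
    using arg_cong[OF PZ, of "\<lambda>A. A $$ (0, 0)"] P(1)
    by (simp add: mat_diag_def scalar_prod_def numeral_2_eq_2)
  ultimately show ?thesis by (simp add: mult.commute)
qed

lemma not_mod_iso_one_dim_two_dim_mod:
  "\<not> mod_iso (one_dim_mod a) (two_dim_mod q b)" "\<not> mod_iso (two_dim_mod q b) (one_dim_mod a)"
  by (simp_all add: mod_iso_def one_dim_mod_def two_dim_mod_def)

lemma std_mod_iso_imp_eq:
  fixes q :: "'k::field"
  assumes q: "primitive_root (2 * n) q" and j: "valid_idx n j" and j': "valid_idx n j'"
    and iso: "mod_iso (std_mod q j) (std_mod q j')"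
  shows "j = j'"
proof -
  have "n = 0 \<or> q \<noteq> 0" using primitive_root_nonzero[OF q] by auto
  then show ?thesis
    using iso j j' primitive_root_power_inj[OF q]
    by (cases j; cases j')
       (auto simp: std_mod_eq valid_idx_def not_mod_iso_one_dim_two_dim_mod
         dest: mod_iso_one_dim_mod_eq mod_iso_two_dim_mod_eq)
qed

lemma is_wH_mod_std_mod:
  fixes q :: "'k::field"
  assumes q: "q ^ (2 * n) = 1"
  shows "is_wH_mod n q (std_mod q j)"
proof -
  have "(q ^ i) ^ (2 * n + 1) = q ^ i" for i using power_power_eq_one[OF q] by simp
  then show ?thesis
    using q by (cases j) (auto simp: std_mod_eq intro: is_wH_mod_one_dim_mod is_wH_mod_two_dim_mod)
qed

lemma indecomposable_std_mod: "indecomposable (std_mod q j)"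
  by (cases j) (simp_all only: std_mod_eq one_dim_mod_def two_dim_mod_def indecomposable_dim1
      indecomposable_shift_mat2)

section \<open>Classification\<close>

lemma mod_iso_one_dim_modI:
  fixes Z X :: "'k::field_char_0 mat"
  assumes ind: "indecomposable (d, Z, X)"
    and Z: "Z \<in> carrier_mat d d" and X: "X \<in> carrier_mat d d"
    and v: "v \<in> carrier_vec d" and \<psi>: "\<psi> \<in> carrier_vec d"
    and Zv: "Z *\<^sub>v v = c \<cdot>\<^sub>v v" and Xv: "X *\<^sub>v v = 0\<^sub>v d"
    and Z\<psi>: "transpose_mat Z *\<^sub>v \<psi> = c \<cdot>\<^sub>v \<psi>" and X\<psi>: "transpose_mat X *\<^sub>v \<psi> = 0\<^sub>v d"
    and \<psi>v: "\<psi> \<bullet> v = 1"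
  shows "mod_iso (d, Z, X) (one_dim_mod c)"
  unfolding one_dim_mod_def
proof (rule indecomposable_retract_mod_iso[OF ind Z X])
  let ?P = "mat_of_rows d [\<psi>]" and ?Q = "mat_of_cols d [v]"
  show "?P \<in> carrier_mat 1 d" "?Q \<in> carrier_mat d 1" using mat_of_rows_carrier(1)[of d "[\<psi>]"]
      mat_of_cols_carrier(1)[of d "[v]"] by simp_all
  show "?P * ?Q = 1\<^sub>m 1" using v \<psi> \<psi>v by (intro eq_matI) auto
  have "?P * Z = mat_of_rows d [c \<cdot>\<^sub>v \<psi>]" using mat_of_rows_mult[OF Z, of "[\<psi>]"] \<psi> Z\<psi> by simp
  also have "\<dots> = mat_diag 1 (\<lambda>_. c) * ?P" using mat_diag_mult_mat_of_rows[of "[\<psi>]" 1 d] \<psi> by simp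
  finally show "?P * Z = mat_diag 1 (\<lambda>_. c) * ?P" .
  have "?P * X = mat_of_rows d [0\<^sub>v d]" using mat_of_rows_mult[OF X, of "[\<psi>]"] \<psi> X\<psi> by simp
  also have "\<dots> = 0\<^sub>m 1 1 * ?P" by (intro eq_matI) (auto simp: mat_of_rows_index)
  finally show "?P * X = 0\<^sub>m 1 1 * ?P" .
  have "Z * ?Q = mat_of_cols d [c \<cdot>\<^sub>v v]" using mult_mat_of_cols[OF Z, of "[v]"] v Zv by simp
  also have "\<dots> = ?Q * mat_diag 1 (\<lambda>_. c)" using mat_of_cols_mult_mat_diag[of "[v]" 1 d] v by simp
  finally show "Z * ?Q = ?Q * mat_diag 1 (\<lambda>_. c)" .
  have "X * ?Q = mat_of_cols d [0\<^sub>v d]" using mult_mat_of_cols[OF X, of "[v]"] v Xv by simp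
  also have "\<dots> = ?Q * 0\<^sub>m 1 1" by (intro eq_matI) (auto simp: mat_of_cols_index)
  finally show "X * ?Q = ?Q * 0\<^sub>m 1 1" .
qed auto

lemma mod_iso_two_dim_modI:
  fixes Z X :: "'k::field_char_0 mat"
  assumes ind: "indecomposable (d, Z, X)"
    and Z: "Z \<in> carrier_mat d d" and X: "X \<in> carrier_mat d d"
    and q: "q \<noteq> 0" and ZX: "Z * X = q \<cdot>\<^sub>m (X * Z)" and XX: "X * X = 0\<^sub>m d d"
    and v: "v \<in> carrier_vec d" and \<psi>: "\<psi> \<in> carrier_vec d"
    and Zv: "Z *\<^sub>v v = c \<cdot>\<^sub>v v" and Z\<psi>: "transpose_mat Z *\<^sub>v \<psi> = (c * q) \<cdot>\<^sub>v \<psi>"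
    and \<psi>Xv: "\<psi> \<bullet> (X *\<^sub>v v) = 1" and \<psi>v: "\<psi> \<bullet> v = 0"
  shows "mod_iso (d, Z, X) (two_dim_mod q c)"
proof -
  define u where "u = X *\<^sub>v v"
  define \<phi> where "\<phi> = transpose_mat X *\<^sub>v \<psi>"
  have u: "u \<in> carrier_vec d" and \<phi>: "\<phi> \<in> carrier_vec d" using X v \<psi> by (simp_all add: u_def \<phi>_def)
  have Xt: "transpose_mat X \<in> carrier_mat d d" and Zt: "transpose_mat Z \<in> carrier_mat d d"
    using X Z by simp_all
  have Zu: "Z *\<^sub>v u = (c * q) \<cdot>\<^sub>v u" unfolding u_def by (rule eigenvector_shift[OF Z X ZX v Zv])
  have "transpose_mat Z *\<^sub>v \<phi> = (c * q * inverse q) \<cdot>\<^sub>v \<phi>"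
    unfolding \<phi>_def by (rule eigenvector_shift[OF Zt Xt transpose_commutation[OF Z X ZX q] \<psi> Z\<psi>])
  then have Zt\<phi>: "transpose_mat Z *\<^sub>v \<phi> = c \<cdot>\<^sub>v \<phi>" using q by (simp add: mult.assoc)
  have Xu: "X *\<^sub>v u = 0\<^sub>v d" unfolding u_def using X v XX by (simp flip: assoc_mult_mat_vec)
  have "transpose_mat X * transpose_mat X = 0\<^sub>m d d"
    using arg_cong[OF XX, of transpose_mat] X by (simp add: transpose_mult[of _ d d _ d])
  then have Xt\<phi>: "transpose_mat X *\<^sub>v \<phi> = 0\<^sub>v d"
    unfolding \<phi>_def using Xt \<psi> by (simp flip: assoc_mult_mat_vec)
  have \<phi>v: "\<phi> \<bullet> v = 1" and \<phi>u: "\<phi> \<bullet> u = 0"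
    using transpose_vec_mult_scalar[OF X _ \<psi>] v u \<psi>Xv Xu \<psi> by (simp_all add: \<phi>_def u_def)
  let ?P = "mat_of_rows d [\<phi>, \<psi>]" and ?Q = "mat_of_cols d [v, u]"
  show ?thesis
    unfolding two_dim_mod_def
  proof (rule indecomposable_retract_mod_iso[OF ind Z X])
    show "?P \<in> carrier_mat 2 d" "?Q \<in> carrier_mat d 2" using mat_of_rows_carrier(1)[of d "[\<phi>, \<psi>]"]
        mat_of_cols_carrier(1)[of d "[v, u]"] by (simp_all add: numeral_2_eq_2)
    show "?P * ?Q = 1\<^sub>m 2"
      using v u \<phi> \<psi> \<phi>v \<phi>u \<psi>v \<psi>Xv
      by (intro eq_matI) (auto simp: u_def less_2_cases_iff)
    have "?P * Z = mat_of_rows d [c \<cdot>\<^sub>v \<phi>, (c * q) \<cdot>\<^sub>v \<psi>]"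
      using mat_of_rows_mult[OF Z, of "[\<phi>, \<psi>]"] \<phi> \<psi> Zt\<phi> Z\<psi> by simp
    also have "\<dots> = mat_diag 2 (\<lambda>r. c * q ^ r) * ?P"
      using mat_diag_mult_mat_of_rows[of "[\<phi>, \<psi>]" 2 d] \<phi> \<psi> by (simp add: numeral_2_eq_2)
    finally show "?P * Z = mat_diag 2 (\<lambda>r. c * q ^ r) * ?P" .
    have "?P * X = mat_of_rows d [0\<^sub>v d, \<phi>]"
      using mat_of_rows_mult[OF X, of "[\<phi>, \<psi>]"] \<phi> \<psi> Xt\<phi> by (simp add: \<phi>_def)
    also have "\<dots> = shift_mat2 * ?P" using shift_mat2_mult_mat_of_rows[OF \<phi> \<psi>] ..
    finally show "?P * X = shift_mat2 * ?P" .
    have "Z * ?Q = mat_of_cols d [c \<cdot>\<^sub>v v, (c * q) \<cdot>\<^sub>v u]"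
      using mult_mat_of_cols[OF Z, of "[v, u]"] v u Zv Zu by simp
    also have "\<dots> = ?Q * mat_diag 2 (\<lambda>r. c * q ^ r)"
      using mat_of_cols_mult_mat_diag[of "[v, u]" 2 d] v u by (simp add: numeral_2_eq_2)
    finally show "Z * ?Q = ?Q * mat_diag 2 (\<lambda>r. c * q ^ r)" .
    have "X * ?Q = mat_of_cols d [u, 0\<^sub>v d]"
      using mult_mat_of_cols[OF X, of "[v, u]"] v u Xu by (simp add: u_def)
    also have "\<dots> = ?Q * shift_mat2" using mat_of_cols_mult_shift_mat2[OF v u] ..
    finally show "X * ?Q = ?Q * shift_mat2" .
  qed auto
qed

lemma indecomposable_wH_mod_Z_cases:
  fixes q :: "'k::field"
  assumes wH: "is_wH_mod n q (d, Z, X)" and ind: "indecomposable (d, Z, X)" and q: "q ^ (2 * n) = 1"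
  shows "Z = 0\<^sub>m d d \<or> Z ^\<^sub>m (2 * n) = 1\<^sub>m d"
proof -
  have Z: "Z \<in> carrier_mat d d" and X: "X \<in> carrier_mat d d"
    and period: "Z ^\<^sub>m Suc (2 * n) = Z" and ZX: "Z * X = q \<cdot>\<^sub>m (X * Z)"
    using wH by (auto simp: is_wH_mod_def)
  have "Z ^\<^sub>m (2 * n) * Z = Z * Z ^\<^sub>m (2 * n)" using pow_mat_Suc_left[OF Z] by simp
  moreover have "Z ^\<^sub>m (2 * n) * X = X * Z ^\<^sub>m (2 * n)"
    using pow_mat_commutation[OF Z X ZX, of "2 * n"] q X Z by (intro eq_matI) auto
  ultimately have "Z ^\<^sub>m (2 * n) = 0\<^sub>m d d \<or> Z ^\<^sub>m (2 * n) = 1\<^sub>m d"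
    using indecomposable_idempotent[OF ind _ Z X pow_mat_idempotent[OF Z period]] Z by simp
  moreover have "Z = Z ^\<^sub>m (2 * n) * Z" using period by simp
  ultimately show ?thesis using Z by auto
qed

lemma classify_Z_zero:
  fixes X :: "'k::field_char_0 mat"
  assumes ind: "indecomposable (d, 0\<^sub>m d d, X)" and X: "X \<in> carrier_mat d d"
    and XX: "X * X = 0\<^sub>m d d" and q: "q \<noteq> 0"
  shows "mod_iso (d, 0\<^sub>m d d, X) (one_dim_mod 0) \<or> mod_iso (d, 0\<^sub>m d d, X) (two_dim_mod q 0)"
proof (cases "X = 0\<^sub>m d d")
  case True
  have "0 < d" using ind by (simp add: indecomposable_def)
  then have "mod_iso (d, 0\<^sub>m d d, X) (one_dim_mod 0)"
    using True by (intro mod_iso_one_dim_modI[OF ind _ X, of "unit_vec d 0" "unit_vec d 0"]) auto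
  then show ?thesis ..
next
  case False
  obtain w where w: "w \<in> carrier_vec d" "X *\<^sub>v w \<noteq> 0\<^sub>v d"
    using exists_mult_vec_nonzero[OF X False] by blast
  obtain \<phi> where \<phi>: "\<phi> \<in> carrier_vec d" "\<phi> \<bullet> (X *\<^sub>v w) = 1"
    using exists_dual_vector[of "X *\<^sub>v w" d] X w by auto
  (* The correction makes psi vanish on w; it is invisible on X w since X (X w) = 0. *)
  define \<psi> where "\<psi> = \<phi> - (\<phi> \<bullet> w) \<cdot>\<^sub>v (transpose_mat X *\<^sub>v \<phi>)"
  have \<psi>: "\<psi> \<in> carrier_vec d" using X \<phi> by (simp add: \<psi>_def)
  have \<psi>x: "\<psi> \<bullet> x = \<phi> \<bullet> x - (\<phi> \<bullet> w) * (\<phi> \<bullet> (X *\<^sub>v x))" if "x \<in> carrier_vec d" for x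
    using that X \<phi> transpose_vec_mult_scalar[OF X that \<phi>(1)]
    by (simp add: \<psi>_def minus_scalar_prod_distrib[of _ d])
  have "X *\<^sub>v (X *\<^sub>v w) = 0\<^sub>v d" using X w XX by (simp flip: assoc_mult_mat_vec)
  then have "\<psi> \<bullet> (X *\<^sub>v w) = 1" using \<psi>x[of "X *\<^sub>v w"] \<phi> X w by simp
  moreover have "\<psi> \<bullet> w = 0" using \<psi>x[OF w(1)] \<phi> by simp
  ultimately have "mod_iso (d, 0\<^sub>m d d, X) (two_dim_mod q 0)"
    using X XX q w \<psi> by (intro mod_iso_two_dim_modI[OF ind _ X q]) auto
  then show ?thesis ..
qed

lemma classify_Z_periodic_X_zero:
  fixes Z :: "'k::field_char_0 mat" and q :: 'k
  assumes ind: "indecomposable (d, Z, 0\<^sub>m d d)" and Z: "Z \<in> carrier_mat d d"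
    and ZN: "Z ^\<^sub>m N = 1\<^sub>m d" and q: "primitive_root N q" and N: "0 < N"
  shows "\<exists>i<N. mod_iso (d, Z, 0\<^sub>m d d) (one_dim_mod (q ^ i))"
proof -
  have "0 < d" using ind by (simp add: indecomposable_def)
  then have "unit_vec d 0 \<bullet> unit_vec d 0 \<noteq> (0 :: 'k)"
    using scalar_prod_right_unit[of 0 d "unit_vec d 0 :: 'k vec"] by simp
  then obtain i v where i: "i < N" and v: "v \<in> carrier_vec d" "Z *\<^sub>v v = q ^ i \<cdot>\<^sub>v v"
    and "unit_vec d 0 \<bullet> v \<noteq> 0"
    using exists_weight_vector[OF Z ZN q N unit_vec_carrier unit_vec_carrier] by blast
  then have "v \<noteq> 0\<^sub>v d" by auto
  then obtain \<psi> where \<psi>: "\<psi> \<in> carrier_vec d" "transpose_mat Z *\<^sub>v \<psi> = q ^ i \<cdot>\<^sub>v \<psi>" "\<psi> \<bullet> v = 1"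
    using exists_dual_weight_vector[OF Z ZN q N v(1) _ v(2)] by blast
  have "mod_iso (d, Z, 0\<^sub>m d d) (one_dim_mod (q ^ i))"
    using v \<psi> by (intro mod_iso_one_dim_modI[OF ind Z _ v(1) \<psi>(1)]) auto
  then show ?thesis using i by blast
qed

lemma classify_Z_periodic_X_nonzero:
  fixes Z X :: "'k::field_char_0 mat" and q :: 'k
  assumes ind: "indecomposable (d, Z, X)" and Z: "Z \<in> carrier_mat d d" and X: "X \<in> carrier_mat d d"
    and ZX: "Z * X = q \<cdot>\<^sub>m (X * Z)" and XX: "X * X = 0\<^sub>m d d" and X0: "X \<noteq> 0\<^sub>m d d"
    and ZN: "Z ^\<^sub>m N = 1\<^sub>m d" and q: "primitive_root N q" and N: "1 < N"
  shows "\<exists>i<N. mod_iso (d, Z, X) (two_dim_mod q (q ^ i))"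
proof -
  have N0: "0 < N" using N by simp
  have q0: "q \<noteq> 0" using primitive_root_nonzero[OF q N0] .
  have "q ^ 1 \<noteq> 1" using q N unfolding primitive_root_def by blast
  then have q1: "q \<noteq> 1" by simp
  obtain w where w: "w \<in> carrier_vec d" "X *\<^sub>v w \<noteq> 0\<^sub>v d"
    using exists_mult_vec_nonzero[OF X X0] by blast
  obtain \<phi> where \<phi>: "\<phi> \<in> carrier_vec d" "\<phi> \<bullet> (X *\<^sub>v w) = 1"
    using exists_dual_vector[of "X *\<^sub>v w" d] X w by auto
  have X\<phi>: "(transpose_mat X *\<^sub>v \<phi>) \<bullet> x = \<phi> \<bullet> (X *\<^sub>v x)" if "x \<in> carrier_vec d" for x
    by (rule transpose_vec_mult_scalar[OF X that \<phi>(1)])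
  have "transpose_mat X *\<^sub>v \<phi> \<in> carrier_vec d" using X \<phi> by simp
  moreover have "(transpose_mat X *\<^sub>v \<phi>) \<bullet> w \<noteq> 0" using X\<phi>[OF w(1)] \<phi>(2) by simp
  ultimately obtain i v where i: "i < N" and v: "v \<in> carrier_vec d" "Z *\<^sub>v v = q ^ i \<cdot>\<^sub>v v"
    and "(transpose_mat X *\<^sub>v \<phi>) \<bullet> v \<noteq> 0"
    using exists_weight_vector[OF Z ZN q N0 _ w(1)] by blast
  then have "\<phi> \<bullet> (X *\<^sub>v v) \<noteq> 0" using X\<phi> by simp
  then have u: "X *\<^sub>v v \<noteq> 0\<^sub>v d" using \<phi>(1) by auto
  have Zu: "Z *\<^sub>v (X *\<^sub>v v) = (q ^ i * q) \<cdot>\<^sub>v (X *\<^sub>v v)" by (rule eigenvector_shift[OF Z X ZX v])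
  obtain \<psi> where \<psi>: "\<psi> \<in> carrier_vec d" "transpose_mat Z *\<^sub>v \<psi> = (q ^ i * q) \<cdot>\<^sub>v \<psi>"
    "\<psi> \<bullet> (X *\<^sub>v v) = 1"
    using exists_dual_weight_vector[OF Z ZN q N0 mult_mat_vec_carrier[OF X v(1)] u Zu] by blast
  have "(q ^ i * q) * (\<psi> \<bullet> v) = (transpose_mat Z *\<^sub>v \<psi>) \<bullet> v" using \<psi> v by simp
  also have "\<dots> = \<psi> \<bullet> (Z *\<^sub>v v)" by (rule transpose_vec_mult_scalar[OF Z v(1) \<psi>(1)])
  also have "\<dots> = q ^ i * (\<psi> \<bullet> v)" using \<psi> v by simp
  finally have "q ^ i * (q - 1) * (\<psi> \<bullet> v) = 0" by (simp add: algebra_simps)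
  then have "\<psi> \<bullet> v = 0" using q0 q1 by simp
  then have "mod_iso (d, Z, X) (two_dim_mod q (q ^ i))"
    by (rule mod_iso_two_dim_modI[OF ind Z X q0 ZX XX v(1) \<psi>(1) v(2) \<psi>(2,3)])
  then show ?thesis using i by blast
qed

lemma indecomposable_wH_mod_classification:
  fixes q :: "'k::field_char_0"
  assumes n: "1 \<le> n" and q: "primitive_root (2 * n) q"
    and wH: "is_wH_mod n q (d, Z, X)" and ind: "indecomposable (d, Z, X)"
  shows "\<exists>j. valid_idx n j \<and> mod_iso (d, Z, X) (std_mod q j)"
proof -
  have X: "X \<in> carrier_mat d d" and XX: "X * X = 0\<^sub>m d d"
    and Z: "Z \<in> carrier_mat d d" and ZX: "Z * X = q \<cdot>\<^sub>m (X * Z)"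
    using wH by (auto simp: is_wH_mod_def)
  have "q ^ (2 * n) = 1" using q by (simp add: primitive_root_def)
  from indecomposable_wH_mod_Z_cases[OF wH ind this]
  show ?thesis
  proof
    assume "Z = 0\<^sub>m d d"
    moreover have "q \<noteq> 0" using primitive_root_nonzero[OF q] n by simp
    ultimately show ?thesis
      using classify_Z_zero[of d X q] ind X XX
      by (auto simp: std_mod_eq valid_idx_def intro: exI[of _ N0] exI[of _ N1])
  next
    assume ZN: "Z ^\<^sub>m (2 * n) = 1\<^sub>m d"
    show ?thesis
    proof (cases "X = 0\<^sub>m d d")
      case True
      then obtain i where "i < 2 * n" "mod_iso (d, Z, X) (std_mod q (S i))"
        using classify_Z_periodic_X_zero[of d Z, OF _ Z ZN q] ind n by (auto simp: std_mod_eq)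
      then have "valid_idx n (S i) \<and> mod_iso (d, Z, X) (std_mod q (S i))"
        by (simp add: valid_idx_def)
      then show ?thesis ..
    next
      case False
      then obtain i where "i < 2 * n" "mod_iso (d, Z, X) (std_mod q (M i))"
        using classify_Z_periodic_X_nonzero[OF ind Z X ZX XX _ ZN q] n by (auto simp: std_mod_eq)
      then have "valid_idx n (M i) \<and> mod_iso (d, Z, X) (std_mod q (M i))"
        by (simp add: valid_idx_def)
      then show ?thesis ..
    qed
  qed
qed

theorem proposition4p1:
  fixes q a :: "'k::field_char_0" and n :: nat
  assumes "alg_closed TYPE('k)"
    and "n \<ge> 1"
    and "primitive_root (2*n) q"
    and "a \<noteq> 0"
  shows "(\<forall>j. valid_idx n j \<longrightarrow> is_wH_mod n q (std_mod q j) \<and> indecomposable (std_mod q j))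
       \<and> (\<forall>j j'. valid_idx n j \<and> valid_idx n j' \<and> j \<noteq> j' \<longrightarrow>
              \<not> mod_iso (std_mod q j) (std_mod q j'))
       \<and> (\<forall>Mo :: 'k rep. is_wH_mod n q Mo \<and> indecomposable Mo \<longrightarrow>
              (\<exists>j. valid_idx n j \<and> mod_iso Mo (std_mod q j)))"
proof (intro conjI allI impI)
  show "is_wH_mod n q (std_mod q j)" for j
    using assms(3) by (intro is_wH_mod_std_mod) (simp add: primitive_root_def)
  show "indecomposable (std_mod q j)" for j by (rule indecomposable_std_mod)
next
  fix j j' assume "valid_idx n j \<and> valid_idx n j' \<and> j \<noteq> j'"
  then show "\<not> mod_iso (std_mod q j) (std_mod q j')" using std_mod_iso_imp_eq[OF assms(3)] by blast
next
  fix Mo :: "'k rep" assume "is_wH_mod n q Mo \<and> indecomposable Mo"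
  then show "\<exists>j. valid_idx n j \<and> mod_iso Mo (std_mod q j)"
    using indecomposable_wH_mod_classification[OF assms(2,3)] by (cases Mo) auto
qed

end
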